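(* Let $X=X_F\uplus X_H$ be a set of $n\ge1$ clocks, $M\in\mathbb{N}$, and let $v_1,v_2$ be valuations with $v_1\sim_M v_2$. Let $x,y$ be clocks such that $-M\le v_1(x),v_1(y)\le M$. Then $\lfloor v_1(x)\rfloor=\lfloor v_2(x)\rfloor$, $\{v_1(x)\}=0$ iff $\{v_2(x)\}=0$, and $\{v_1(x)\}\le\{v_1(y)\}$ iff $\{v_2(x)\}\le\{v_2(y)\}$.
   Context: $X_F$ are future clocks, $X_H$ history clocks. $\overline{\mathbb{R}}=\mathbb{R}\cup\{\pm\infty\}$ with $(+\infty)+\alpha=+\infty$, $(-\infty)+\beta=-\infty$ for $\beta\ne+\infty$, $-(\pm\infty)=\mp\infty$. A valuation $v:X\cup\{0\}\to\overline{\mathbb{R}}$ has $v(0)=0$, $v(x)\in\mathbb{R}_{\ge0}\cup\{+\infty\}$ for $x\in X_H$, $v(x)\in\mathbb{R}_{\le0}\cup\{-\infty\}$ for $x\in X_F$. For $\alpha\in\mathbb{R}$, $\{\alpha\}=\alpha-\lfloor\alpha\rfloor$. For $K\in\mathbb{N}$ and $\alpha,\beta\in\overline{\mathbb{R}}$, $\alpha\sim_K\beta$ iff for all ${\triangleleft}\in\{<,\le\}$ and all $c\in\{-\infty,+\infty\}$ or $c\in\mathbb{Z}$ with $|c|\le K$: $\alpha\triangleleft c\iff\beta\triangleleft c$. For valuations, $v_1\sim_M v_2$ iff (i) $v_1(x)\sim_{nM}v_2(x)$ for all $x\in X$, and (ii) $v_1(x)-v_1(y)\sim_{(n+1)M}v_2(x)-v_2(y)$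 for all $x,y\in X$, where $n=|X|$. *)

theory Defs
  imports Complex_Main "HOL-Library.Extended_Real"
begin

text \<open>Extended reals are modelled by the library type ereal, whose addition
  satisfies (+inf)+a = +inf and (-inf)+b = -inf for b ~= +inf, and x - y = x + (-y).\<close>

definition sim_K :: "nat \<Rightarrow> ereal \<Rightarrow> ereal \<Rightarrow> bool" where
  "sim_K K a b \<longleftrightarrow>
     (\<forall>c \<in> {-\<infinity>, \<infinity>} \<union> {ereal (real_of_int k) | k. \<bar>k\<bar> \<le> int K}.
        (a < c \<longleftrightarrow> b < c) \<and> (a \<le> c \<longleftrightarrow> b \<le> c))"

text \<open>A valuation on clocks X = XF (future) disjoint-union XH (history);
  the special clock 0 (with v(0)=0) is left implicit.\<close>
definition valuation :: "'c set \<Rightarrow> 'c set \<Rightarrow> ('c \<Rightarrow> ereal) \<Rightarrow> bool" where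
  "valuation XF XH v \<longleftrightarrow> (\<forall>x\<in>XH. 0 \<le> v x) \<and> (\<forall>x\<in>XF. v x \<le> 0)"

definition sim_val :: "'c set \<Rightarrow> nat \<Rightarrow> ('c \<Rightarrow> ereal) \<Rightarrow> ('c \<Rightarrow> ereal) \<Rightarrow> bool" where
  "sim_val X M v1 v2 \<longleftrightarrow>
     (\<forall>x\<in>X. sim_K (card X * M) (v1 x) (v2 x)) \<and>
     (\<forall>x\<in>X. \<forall>y\<in>X. sim_K ((card X + 1) * M) (v1 x - v1 y) (v2 x - v2 y))"

end

theory Submission
  imports Defs
begin

text \<open>Within the range [-M, M], the floor of v(x) and whether v(x) is an integer are
  determined by comparisons of v(x) with integers of absolute value at most M, and
  frac(v x) \<le> frac(v y) holds iff v x - v y \<le> \<lfloor>v x\<rfloor> - \<lfloor>v y\<rfloor>, a comparison with an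
  integer of absolute value at most 2M. Since n \<ge> 1, the constants nM and (n+1)M of
  the equivalence cover these ranges.\<close>

lemma sim_K_sym: "sim_K K a b \<Longrightarrow> sim_K K b a"
  unfolding sim_K_def by blast

lemma sim_K_mono: "sim_K K a b \<Longrightarrow> L \<le> K \<Longrightarrow> sim_K L a b"
  unfolding sim_K_def by force

lemma sim_K_of_int:
  assumes "sim_K K a b" and "\<bar>k\<bar> \<le> int K"
  shows "a < ereal (of_int k) \<longleftrightarrow> b < ereal (of_int k)"
    and "a \<le> ereal (of_int k) \<longleftrightarrow> b \<le> ereal (of_int k)"
  using assms unfolding sim_K_def by blast+

lemma sim_K_eq_of_int:
  assumes "sim_K K (ereal (of_int k)) b" and "\<bar>k\<bar> \<le> int K"
  shows "b = ereal (of_int k)"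
  using sim_K_of_int[OF assms] by auto

lemma sim_K_ereal_bounded:
  assumes "sim_K K (ereal r) b" and "\<bar>r\<bar> \<le> real K"
  obtains s where "b = ereal s" and "\<bar>s\<bar> \<le> real K"
proof -
  have "b \<le> ereal (real K)"
    using sim_K_of_int(2)[OF assms(1), of "int K"] assms(2) by (simp add: abs_le_iff)
  moreover have "\<not> b < ereal (- real K)"
    using sim_K_of_int(1)[OF assms(1), of "- int K"] assms(2) by (simp add: abs_le_iff)
  ultimately show thesis
    using that by (cases b) auto
qed

lemma abs_floor_le:
  fixes r :: real
  assumes "\<bar>r\<bar> \<le> real K"
  shows "\<bar>\<lfloor>r\<rfloor>\<bar> \<le> int K"
  using assms by linarith

lemma floor_le_floor_of_sim_K:
  assumes "sim_K K (ereal r) (ereal s)" and "\<bar>r\<bar> \<le> real K"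
  shows "\<lfloor>r\<rfloor> \<le> \<lfloor>s\<rfloor>"
proof -
  have "\<not> ereal r < ereal (of_int \<lfloor>r\<rfloor>)"
    by (simp add: not_less)
  then have "\<not> ereal s < ereal (of_int \<lfloor>r\<rfloor>)"
    using sim_K_of_int(1)[OF assms(1) abs_floor_le[OF assms(2)]] by blast
  then show ?thesis
    by (simp add: le_floor_iff)
qed

lemma floor_eq_of_sim_K:
  assumes "sim_K K (ereal r) (ereal s)" and "\<bar>r\<bar> \<le> real K" and "\<bar>s\<bar> \<le> real K"
  shows "\<lfloor>r\<rfloor> = \<lfloor>s\<rfloor>"
  using floor_le_floor_of_sim_K[OF assms(1,2)] floor_le_floor_of_sim_K[OF sim_K_sym[OF assms(1)] assms(3)]
  by simp

lemma frac_eq_0_of_sim_K: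
  assumes "sim_K K (ereal r) (ereal s)" and "\<bar>r\<bar> \<le> real K" and "frac r = 0"
  shows "frac s = 0"
proof -
  obtain k where k: "r = of_int k"
    using \<open>frac r = 0\<close> by (auto simp: frac_eq_0_iff elim: Ints_cases)
  with assms(2) have "\<bar>k\<bar> \<le> int K"
    by linarith
  with assms(1) k have "s = of_int k"
    using sim_K_eq_of_int by fastforce
  then show ?thesis
    by simp
qed

lemma frac_le_frac_iff:
  fixes r s :: real
  shows "frac r \<le> frac s \<longleftrightarrow> r - s \<le> of_int (\<lfloor>r\<rfloor> - \<lfloor>s\<rfloor>)"
  unfolding frac_def by linarith

theorem lemma9:
  fixes XF XH :: "'c set" and M :: nat and v1 v2 :: "'c \<Rightarrow> ereal" and x y :: 'c
  assumes "finite (XF \<union> XH)" and "XF \<inter> XH = {}" and "card (XF \<union> XH) \<ge> 1"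
    and "valuation XF XH v1" and "valuation XF XH v2"
    and "sim_val (XF \<union> XH) M v1 v2"
    and "x \<in> XF \<union> XH" and "y \<in> XF \<union> XH"
    and "- ereal (real M) \<le> v1 x" and "v1 x \<le> ereal (real M)"
    and "- ereal (real M) \<le> v1 y" and "v1 y \<le> ereal (real M)"
  shows "\<exists>r1 r2 s1 s2. v1 x = ereal r1 \<and> v2 x = ereal r2 \<and> v1 y = ereal s1 \<and> v2 y = ereal s2 \<and>
           \<lfloor>r1\<rfloor> = \<lfloor>r2\<rfloor> \<and> (frac r1 = 0 \<longleftrightarrow> frac r2 = 0) \<and>
           (frac r1 \<le> frac s1 \<longleftrightarrow> frac r2 \<le> frac s2)"
proof -
  let ?n = "card (XF \<union> XH)"
  have sim_x: "sim_K M (v1 x) (v2 x)" and sim_y: "sim_K M (v1 y) (v2 y)"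
    using assms(3,6,7,8) sim_K_mono[of "?n * M" _ _ M] unfolding sim_val_def by auto
  have sim_xy: "sim_K (2 * M) (v1 x - v1 y) (v2 x - v2 y)"
    using assms(3,6,7,8) sim_K_mono[of "(?n + 1) * M" _ _ "2 * M"] unfolding sim_val_def by auto
  obtain r1 where r1: "v1 x = ereal r1" "\<bar>r1\<bar> \<le> real M"
    using assms(9,10) by (cases "v1 x") auto
  obtain s1 where s1: "v1 y = ereal s1" "\<bar>s1\<bar> \<le> real M"
    using assms(11,12) by (cases "v1 y") auto
  obtain r2 where r2: "v2 x = ereal r2" "\<bar>r2\<bar> \<le> real M"
    using sim_K_ereal_bounded[OF sim_x[unfolded r1(1)] r1(2)] .
  obtain s2 where s2: "v2 y = ereal s2" "\<bar>s2\<bar> \<le> real M"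
    using sim_K_ereal_bounded[OF sim_y[unfolded s1(1)] s1(2)] .
  note sim_r = sim_x[unfolded r1(1) r2(1)] and sim_s = sim_y[unfolded s1(1) s2(1)]
  have floor_r: "\<lfloor>r1\<rfloor> = \<lfloor>r2\<rfloor>" and floor_s: "\<lfloor>s1\<rfloor> = \<lfloor>s2\<rfloor>"
    using floor_eq_of_sim_K[OF sim_r r1(2) r2(2)] floor_eq_of_sim_K[OF sim_s s1(2) s2(2)] .
  have "frac r1 = 0 \<longleftrightarrow> frac r2 = 0"
    using frac_eq_0_of_sim_K[OF sim_r r1(2)] frac_eq_0_of_sim_K[OF sim_K_sym[OF sim_r] r2(2)] by blast
  moreover have "frac r1 \<le> frac s1 \<longleftrightarrow> frac r2 \<le> frac s2"
  proof -
    have "\<bar>\<lfloor>r1\<rfloor> - \<lfloor>s1\<rfloor>\<bar> \<le> int (2 * M)"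
      using r1(2) s1(2) by linarith
    from sim_K_of_int(2)[OF sim_xy this] show ?thesis
      using r1 r2 s1 s2 floor_r floor_s by (simp add: frac_le_frac_iff)
  qed
  ultimately show ?thesis
    using r1 r2 s1 s2 floor_r by blast
qed

end
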